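(* Let $X,Y\in\mathcal L^2$ be identically distributed and $r\in[-1,1]$. Then $(X,Y)\in\mathrm{IC}_r$ if and only if $(X,Y)$ is quasi-$r$-Fréchet.
   Context: All random variables live on an atomless probability space. $\mathcal L^2$ denotes the set of non-degenerate real random variables with finite variance. A function $g:\mathbb R\to\mathbb R$ is admissible for $(X,Y)$ if it is measurable and $g(X),g(Y)\in\mathcal L^2$. For $r\in[-1,1]$, $(X,Y)\in\mathrm{IC}_r$ means $X,Y\in\mathcal L^2$ and $\mathrm{Corr}(X,Y)=\mathrm{Corr}(g(X),g(Y))=r$ for all admissible $g$. A random vector $(X,Y)$ with identical marginal distribution function $F$ and joint distribution function $H$ is quasi-$r$-Fréchet if $\frac{H(x,y)+H(y,x)}{2}=r\min(F(x),F(y))+(1-r)F(x)F(y)$ for all $x,y\in\mathbb R$. *)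

theory Defs
  imports "HOL-Probability.Probability"
begin

definition atomless :: "'a measure \<Rightarrow> bool" where
  "atomless M \<longleftrightarrow> (\<forall>A\<in>sets M. measure M A > 0 \<longrightarrow>
     (\<exists>B\<in>sets M. B \<subseteq> A \<and> 0 < measure M B \<and> measure M B < measure M A))"

definition L2 :: "'a measure \<Rightarrow> ('a \<Rightarrow> real) \<Rightarrow> bool" where
  "L2 M X \<longleftrightarrow> X \<in> borel_measurable M \<and> integrable M (\<lambda>\<omega>. (X \<omega>)\<^sup>2)
     \<and> \<not> (\<exists>c. AE \<omega> in M. X \<omega> = c)"

definition covar :: "'a measure \<Rightarrow> ('a \<Rightarrow> real) \<Rightarrow> ('a \<Rightarrow> real) \<Rightarrow> real" where
  "covar M X Y = (\<integral>\<omega>. (X \<omega> - (\<integral>\<omega>. X \<omega> \<partial>M)) * (Y \<omega> - (\<integral>\<omega>. Y \<omega> \<partial>M)) \<partial>M)"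

definition corr :: "'a measure \<Rightarrow> ('a \<Rightarrow> real) \<Rightarrow> ('a \<Rightarrow> real) \<Rightarrow> real" where
  "corr M X Y = covar M X Y / sqrt (covar M X X * covar M Y Y)"

definition admissible :: "'a measure \<Rightarrow> (real \<Rightarrow> real) \<Rightarrow> ('a \<Rightarrow> real) \<Rightarrow> ('a \<Rightarrow> real) \<Rightarrow> bool" where
  "admissible M g X Y \<longleftrightarrow> g \<in> borel_measurable borel \<and> L2 M (g \<circ> X) \<and> L2 M (g \<circ> Y)"

definition IC :: "'a measure \<Rightarrow> real \<Rightarrow> ('a \<Rightarrow> real) \<Rightarrow> ('a \<Rightarrow> real) \<Rightarrow> bool" where
  "IC M r X Y \<longleftrightarrow> L2 M X \<and> L2 M Y \<and> corr M X Y = r \<and>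
     (\<forall>g. admissible M g X Y \<longrightarrow> corr M (g \<circ> X) (g \<circ> Y) = r)"

definition cdf1 :: "'a measure \<Rightarrow> ('a \<Rightarrow> real) \<Rightarrow> real \<Rightarrow> real" where
  "cdf1 M X x = measure M {\<omega>\<in>space M. X \<omega> \<le> x}"

definition jcdf :: "'a measure \<Rightarrow> ('a \<Rightarrow> real) \<Rightarrow> ('a \<Rightarrow> real) \<Rightarrow> real \<Rightarrow> real \<Rightarrow> real" where
  "jcdf M X Y x y = measure M {\<omega>\<in>space M. X \<omega> \<le> x \<and> Y \<omega> \<le> y}"

definition quasi_frechet :: "'a measure \<Rightarrow> real \<Rightarrow> ('a \<Rightarrow> real) \<Rightarrow> ('a \<Rightarrow> real) \<Rightarrow> bool" where
  "quasi_frechet M r X Y \<longleftrightarrow> (\<forall>x y.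
     (jcdf M X Y x y + jcdf M X Y y x) / 2
       = r * min (cdf1 M X x) (cdf1 M X y) + (1 - r) * cdf1 M X x * cdf1 M X y)"

end

theory Submission
  imports Defs
begin

text \<open>
  Let F be the common marginal and H the joint distribution function of (X, Y). The quasi-Frechet
  identity says that the signed measure law(X, Y) + law(Y, X) - 2r law(X, X) - 2(1 - r) (F x F)
  vanishes on all quadrants; by Dynkin's pi-lambda theorem it vanishes on all Borel sets of the
  plane and hence integrates every integrable function to 0. Integrating g(x) g(y) gives
  E[g(X) g(Y)] = r E[g(X)^2] + (1 - r) (E g(X))^2, which for identically distributed non-degenerate
  g(X), g(Y) is exactly Corr(g(X), g(Y)) = r.
  Conversely, the same moment identity for the test function g = 1_(-inf,x] + 1_(-inf,y], x <= y,
  reads H(x,x) + H(x,y) + H(y,x) + H(y,y) = r (3F(x) + F(y)) + (1 - r) (F(x) + F(y))^2; the case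
  x = y determines H on the diagonal and then the general case gives the quasi-Frechet identity.
  The test function is degenerate exactly when F(x) = 0 or F(y) = 1, and then the identity holds
  trivially.
\<close>

section \<open>Finite signed combinations of finite measures\<close>

lemma measure_combination_eq_0_generator:
  fixes N :: "'i \<Rightarrow> 'a measure" and c :: "'i \<Rightarrow> real"
  assumes G: "Int_stable G" "G \<subseteq> Pow \<Omega>"
    and finite: "\<And>i. i \<in> I \<Longrightarrow> finite_measure (N i)"
    and sets: "\<And>i. i \<in> I \<Longrightarrow> sets (N i) = sigma_sets \<Omega> G"
    and space: "(\<Sum>i\<in>I. c i * measure (N i) \<Omega>) = 0"
    and gen: "\<And>A. A \<in> G \<Longrightarrow> (\<Sum>i\<in>I. c i * measure (N i) A) = 0"
    and A: "A \<in> sigma_sets \<Omega> G"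
  shows "(\<Sum>i\<in>I. c i * measure (N i) A) = 0"
  using G A
proof (induction rule: sigma_sets_induct_disjoint)
  case (basic A)
  then show ?case by (rule gen)
next
  case empty
  show ?case by simp
next
  case (compl A)
  have "space (N i) = \<Omega>" if "i \<in> I" for i
    using sets_eq_imp_space_eq[of "N i" "sigma \<Omega> G"] sets[OF that] G(2) by simp
  then have "measure (N i) (\<Omega> - A) = measure (N i) \<Omega> - measure (N i) A" if "i \<in> I" for i
    using finite_measure.finite_measure_compl[OF finite[OF that], of A] compl(1) sets[OF that] that by simp
  then have "(\<Sum>i\<in>I. c i * measure (N i) (\<Omega> - A))
      = (\<Sum>i\<in>I. c i * measure (N i) \<Omega>) - (\<Sum>i\<in>I. c i * measure (N i) A)"
    by (simp add: right_diff_distrib sum_subtractf)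
  then show ?case using space compl(2) by simp
next
  case (union A)
  have "(\<lambda>n. \<Sum>i\<in>I. c i * measure (N i) (A n)) sums (\<Sum>i\<in>I. c i * measure (N i) (\<Union>n. A n))"
    using union(2) sets by (intro sums_sum sums_mult finite_measure.finite_measure_UNION finite union(1)) auto
  then show ?case using union(3) sums_unique sums_0 by fastforce
qed

lemma nn_integral_combination_eq:
  fixes N :: "'i \<Rightarrow> 'a measure" and c d :: "'i \<Rightarrow> ennreal"
  assumes sets: "\<And>i. i \<in> I \<Longrightarrow> sets (N i) = sets M"
    and eq: "\<And>A. A \<in> sets M \<Longrightarrow> (\<Sum>i\<in>I. c i * emeasure (N i) A) = (\<Sum>i\<in>I. d i * emeasure (N i) A)"
    and f: "f \<in> borel_measurable M"
  shows "(\<Sum>i\<in>I. c i * (\<integral>\<^sup>+x. f x \<partial>N i)) = (\<Sum>i\<in>I. d i * (\<integral>\<^sup>+x. f x \<partial>N i))"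
  using f
proof (induction rule: borel_measurable_induct)
  case (cong f g)
  have "(\<integral>\<^sup>+x. f x \<partial>N i) = (\<integral>\<^sup>+x. g x \<partial>N i)" if "i \<in> I" for i
    using cong(3) sets_eq_imp_space_eq[OF sets[OF that]] by (intro nn_integral_cong) simp
  then show ?case using cong(4) by (metis (no_types, lifting) sum.cong)
next
  case (set A)
  then show ?case using eq[OF set] sets by (simp cong: sum.cong)
next
  case (mult u a)
  have "(\<integral>\<^sup>+x. a * u x \<partial>N i) = a * (\<integral>\<^sup>+x. u x \<partial>N i)" if "i \<in> I" for i
    using mult(2) sets[OF that] by (intro nn_integral_cmult) simp
  then have "(\<Sum>i\<in>I. e i * (\<integral>\<^sup>+x. a * u x \<partial>N i)) = a * (\<Sum>i\<in>I. e i * (\<integral>\<^sup>+x. u x \<partial>N i))" for e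
    by (simp add: sum_distrib_left mult.left_commute cong: sum.cong)
  then show ?case using mult(4) by simp
next
  case (add u v)
  have "(\<integral>\<^sup>+x. v x + u x \<partial>N i) = (\<integral>\<^sup>+x. v x \<partial>N i) + (\<integral>\<^sup>+x. u x \<partial>N i)" if "i \<in> I" for i
    using add.hyps sets[OF that] by (intro nn_integral_add) simp_all
  then have "(\<Sum>i\<in>I. e i * (\<integral>\<^sup>+x. v x + u x \<partial>N i))
      = (\<Sum>i\<in>I. e i * (\<integral>\<^sup>+x. v x \<partial>N i)) + (\<Sum>i\<in>I. e i * (\<integral>\<^sup>+x. u x \<partial>N i))" for e
    by (simp add: distrib_left sum.distrib cong: sum.cong)
  then show ?case using add.IH by simp
next
  case (seq U)
  have "(\<integral>\<^sup>+x. (SUP j. U j) x \<partial>N i) = (SUP j. \<integral>\<^sup>+x. U j x \<partial>N i)" if "i \<in> I" for i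
    using seq.hyps sets[OF that] by (simp add: image_comp nn_integral_monotone_convergence_SUP)
  moreover have "incseq (\<lambda>j. e * (\<integral>\<^sup>+x. U j x \<partial>N i))" for e i
    using seq.hyps by (auto simp: incseq_def le_fun_def intro!: mult_left_mono nn_integral_mono)
  ultimately have "(\<Sum>i\<in>I. e i * (\<integral>\<^sup>+x. (SUP j. U j) x \<partial>N i))
      = (SUP j. \<Sum>i\<in>I. e i * (\<integral>\<^sup>+x. U j x \<partial>N i))" for e
    by (simp add: SUP_mult_left_ennreal ennreal_SUP_sum cong: sum.cong)
  then show ?case using seq.IH by simp
qed

lemma integral_combination_eq_0_nonneg:
  fixes N :: "'i \<Rightarrow> 'a measure" and c :: "'i \<Rightarrow> real" and h :: "'a \<Rightarrow> real"
  assumes finite: "\<And>i. i \<in> I \<Longrightarrow> finite_measure (N i)"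
    and sets: "\<And>i. i \<in> I \<Longrightarrow> sets (N i) = sets M"
    and eq: "\<And>A. A \<in> sets M \<Longrightarrow> (\<Sum>i\<in>I. c i * measure (N i) A) = 0"
    and h: "h \<in> borel_measurable M" "\<And>x. 0 \<le> h x" "\<And>i. i \<in> I \<Longrightarrow> integrable (N i) h"
  shows "(\<Sum>i\<in>I. c i * (\<integral>x. h x \<partial>N i)) = 0"
proof -
  define cp where "cp i = max (c i) 0" for i
  define cn where "cn i = max (- c i) 0" for i
  have split: "(\<Sum>i\<in>I. c i * a i) = (\<Sum>i\<in>I. cp i * a i) - (\<Sum>i\<in>I. cn i * a i)" for a
  proof -
    have "c i = cp i - cn i" for i
      by (simp add: cp_def cn_def max_def)
    then show ?thesis
      by (simp add: sum_subtractf[symmetric] left_diff_distrib)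
  qed
  have nonneg: "0 \<le> cp i" "0 \<le> cn i" for i
    by (simp_all add: cp_def cn_def)
  have "(\<Sum>i\<in>I. ennreal (cp i) * emeasure (N i) A) = (\<Sum>i\<in>I. ennreal (cn i) * emeasure (N i) A)"
    if "A \<in> sets M" for A
  proof -
    have "(\<Sum>i\<in>I. cp i * measure (N i) A) = (\<Sum>i\<in>I. cn i * measure (N i) A)"
      using eq[OF that] split by simp
    then show ?thesis
      using that sets finite
      by (simp add: finite_measure.emeasure_eq_measure nonneg ennreal_mult'[symmetric] cong: sum.cong)
  qed
  from nn_integral_combination_eq[OF sets this, of "\<lambda>x. ennreal (h x)"]
  have "ennreal (\<Sum>i\<in>I. cp i * (\<integral>x. h x \<partial>N i)) = ennreal (\<Sum>i\<in>I. cn i * (\<integral>x. h x \<partial>N i))"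
    using h by (simp add: nn_integral_eq_integral nonneg ennreal_mult'[symmetric] integral_nonneg_AE cong: sum.cong)
  then have "(\<Sum>i\<in>I. cp i * (\<integral>x. h x \<partial>N i)) = (\<Sum>i\<in>I. cn i * (\<integral>x. h x \<partial>N i))"
    using h by (subst (asm) ennreal_inj) (auto simp: nonneg intro!: sum_nonneg integral_nonneg_AE)
  then show ?thesis
    using split by simp
qed

lemma integral_combination_eq_0:
  fixes N :: "'i \<Rightarrow> 'a measure" and c :: "'i \<Rightarrow> real" and f :: "'a \<Rightarrow> real"
  assumes finite: "\<And>i. i \<in> I \<Longrightarrow> finite_measure (N i)"
    and sets: "\<And>i. i \<in> I \<Longrightarrow> sets (N i) = sets M"
    and eq: "\<And>A. A \<in> sets M \<Longrightarrow> (\<Sum>i\<in>I. c i * measure (N i) A) = 0"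
    and f: "f \<in> borel_measurable M" "\<And>i. i \<in> I \<Longrightarrow> integrable (N i) f"
  shows "(\<Sum>i\<in>I. c i * (\<integral>x. f x \<partial>N i)) = 0"
proof -
  have "(\<integral>x. f x \<partial>N i) = (\<integral>x. max (f x) 0 \<partial>N i) - (\<integral>x. max (- f x) 0 \<partial>N i)" if "i \<in> I" for i
  proof -
    have "(\<integral>x. f x \<partial>N i) = (\<integral>x. max (f x) 0 - max (- f x) 0 \<partial>N i)"
      by (rule Bochner_Integration.integral_cong) auto
    then show ?thesis
      using f(2)[OF that] by simp
  qed
  then have "(\<Sum>i\<in>I. c i * (\<integral>x. f x \<partial>N i))
      = (\<Sum>i\<in>I. c i * (\<integral>x. max (f x) 0 \<partial>N i)) - (\<Sum>i\<in>I. c i * (\<integral>x. max (- f x) 0 \<partial>N i))"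
    by (simp add: right_diff_distrib sum_subtractf)
  also have "\<dots> = 0"
    using integral_combination_eq_0_nonneg[OF finite sets eq, of "\<lambda>x. max (f x) 0"]
      integral_combination_eq_0_nonneg[OF finite sets eq, of "\<lambda>x. max (- f x) 0"] f
    by auto
  finally show ?thesis .
qed

lemma integrable_mult_if_square_integrable:
  fixes U V :: "'a \<Rightarrow> real"
  assumes [measurable]: "U \<in> borel_measurable M" "V \<in> borel_measurable M"
    and "integrable M (\<lambda>\<omega>. (U \<omega>)\<^sup>2)" "integrable M (\<lambda>\<omega>. (V \<omega>)\<^sup>2)"
  shows "integrable M (\<lambda>\<omega>. U \<omega> * V \<omega>)"
proof (rule Bochner_Integration.integrable_bound)
  show "integrable M (\<lambda>\<omega>. (U \<omega>)\<^sup>2 + (V \<omega>)\<^sup>2)"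
    using assms(3,4) by simp
  have "\<bar>a * b\<bar> \<le> a\<^sup>2 + b\<^sup>2" for a b :: real
    using sum_squares_bound[of a b] sum_squares_bound[of a "- b"] by (simp add: abs_if)
  then show "AE \<omega> in M. norm (U \<omega> * V \<omega>) \<le> norm ((U \<omega>)\<^sup>2 + (V \<omega>)\<^sup>2)"
    by simp
qed simp

lemma (in pair_sigma_finite) integrable_product_mult:
  fixes f :: "'a \<Rightarrow> real" and g :: "'b \<Rightarrow> real"
  assumes f: "integrable M1 f" and g: "integrable M2 g"
  shows "integrable (M1 \<Otimes>\<^sub>M M2) (\<lambda>z. f (fst z) * g (snd z))"
proof (rule Fubini_integrable)
  show "(\<lambda>z. f (fst z) * g (snd z)) \<in> borel_measurable (M1 \<Otimes>\<^sub>M M2)"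
    using f g by measurable
  show "integrable M1 (\<lambda>x. \<integral>y. norm (f (fst (x, y)) * g (snd (x, y))) \<partial>M2)"
    using f by (simp add: abs_mult)
  show "AE x in M1. integrable M2 (\<lambda>y. f (fst (x, y)) * g (snd (x, y)))"
    using g by simp
qed

lemma (in pair_sigma_finite) integral_product_mult:
  fixes f :: "'a \<Rightarrow> real" and g :: "'b \<Rightarrow> real"
  assumes f: "integrable M1 f" and g: "integrable M2 g"
  shows "(\<integral>z. f (fst z) * g (snd z) \<partial>(M1 \<Otimes>\<^sub>M M2)) = (\<integral>x. f x \<partial>M1) * (\<integral>y. g y \<partial>M2)"
  using integral_fst'[OF integrable_product_mult[OF f g]] by simp

lemma measure_distr_atMost:
  assumes "U \<in> borel_measurable M"
  shows "measure (distr M borel U) {..a} = cdf1 M U a"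
  using assms unfolding cdf1_def
  by (subst measure_distr) (auto intro!: arg_cong[where f="measure M"])

lemma measure_distr_pair_atMost:
  assumes "U \<in> borel_measurable M" "V \<in> borel_measurable M"
  shows "measure (distr M borel (\<lambda>\<omega>. (U \<omega>, V \<omega>))) {..(a, b)} = jcdf M U V a b"
  using assms unfolding jcdf_def
  by (subst measure_distr) (auto intro!: arg_cong[where f="measure M"] simp: less_eq_prod_def)

lemma jcdf_commute: "jcdf M V U b a = jcdf M U V a b"
  unfolding jcdf_def by (simp add: conj_commute)

context prob_space
begin

lemma covar_eq_expectation:
  fixes U V :: "'a \<Rightarrow> real"
  assumes [measurable]: "U \<in> borel_measurable M" "V \<in> borel_measurable M"
    and U2: "integrable M (\<lambda>\<omega>. (U \<omega>)\<^sup>2)" and V2: "integrable M (\<lambda>\<omega>. (V \<omega>)\<^sup>2)"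
  shows "covar M U V = expectation (\<lambda>\<omega>. U \<omega> * V \<omega>) - expectation U * expectation V"
proof -
  have "integrable M U" "integrable M V"
    using U2 V2 by (simp_all add: square_integrable_imp_integrable)
  moreover have "integrable M (\<lambda>\<omega>. U \<omega> * V \<omega>)"
    using U2 V2 by (simp add: integrable_mult_if_square_integrable)
  ultimately show ?thesis
    by (simp add: covar_def algebra_simps prob_space)
qed

lemma covar_self_pos_if_L2:
  assumes "L2 M U"
  shows "0 < covar M U U"
proof -
  have [measurable]: "U \<in> borel_measurable M" and U2: "integrable M (\<lambda>\<omega>. (U \<omega>)\<^sup>2)"
    and nondegenerate: "\<not> (\<exists>c. AE \<omega> in M. U \<omega> = c)"
    using assms unfolding L2_def by auto
  define m where "m = expectation U"
  have "integrable M U"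
    using U2 by (simp add: square_integrable_imp_integrable)
  then have int: "integrable M (\<lambda>\<omega>. (U \<omega> - m) * (U \<omega> - m))"
    using U2 by (simp add: algebra_simps power2_eq_square)
  have "covar M U U \<noteq> 0"
  proof
    assume "covar M U U = 0"
    then have "AE \<omega> in M. (U \<omega> - m) * (U \<omega> - m) = 0"
      using integral_nonneg_eq_0_iff_AE[OF int] by (simp add: covar_def m_def)
    then have "AE \<omega> in M. U \<omega> = m"
      by eventually_elim simp
    with nondegenerate show False by blast
  qed
  moreover have "0 \<le> covar M U U"
    unfolding covar_def by (intro integral_nonneg_AE) simp
  ultimately show ?thesis by simp
qed

lemma L2_if_second_moment_gt:
  fixes U :: "'a \<Rightarrow> real"
  assumes [measurable]: "U \<in> borel_measurable M" and U2: "integrable M (\<lambda>\<omega>. (U \<omega>)\<^sup>2)"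
    and gt: "(expectation U)\<^sup>2 < expectation (\<lambda>\<omega>. (U \<omega>)\<^sup>2)"
  shows "L2 M U"
proof -
  have "\<not> (AE \<omega> in M. U \<omega> = c)" for c
  proof
    assume const: "AE \<omega> in M. U \<omega> = c"
    have "expectation U = expectation (\<lambda>_. c)"
      using const by (intro integral_cong_AE) auto
    moreover have "expectation (\<lambda>\<omega>. (U \<omega>)\<^sup>2) = expectation (\<lambda>_. c\<^sup>2)"
      using const by (intro integral_cong_AE) auto
    ultimately have "expectation U = c" "expectation (\<lambda>\<omega>. (U \<omega>)\<^sup>2) = c\<^sup>2"
      by (simp_all add: prob_space)
    with gt show False by simp
  qed
  then show ?thesis
    using U2 by (simp add: L2_def)
qed

lemma corr_eq_iff_second_moments:
  fixes U V :: "'a \<Rightarrow> real"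
  assumes U: "L2 M U" and V: "L2 M V"
    and mean: "expectation V = expectation U"
    and second_moment: "expectation (\<lambda>\<omega>. (V \<omega>)\<^sup>2) = expectation (\<lambda>\<omega>. (U \<omega>)\<^sup>2)"
  shows "corr M U V = r \<longleftrightarrow>
    expectation (\<lambda>\<omega>. U \<omega> * V \<omega>) = r * expectation (\<lambda>\<omega>. (U \<omega>)\<^sup>2) + (1 - r) * (expectation U)\<^sup>2"
proof -
  have [measurable]: "U \<in> borel_measurable M" "V \<in> borel_measurable M"
    and "integrable M (\<lambda>\<omega>. (U \<omega>)\<^sup>2)" "integrable M (\<lambda>\<omega>. (V \<omega>)\<^sup>2)"
    using U V by (auto simp: L2_def)
  note covar = covar_eq_expectation[OF _ _ this(3,4)] covar_eq_expectation[OF _ _ this(3,3)]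
    covar_eq_expectation[OF _ _ this(4,4)]
  define var where "var = expectation (\<lambda>\<omega>. (U \<omega>)\<^sup>2) - (expectation U)\<^sup>2"
  have UU: "covar M U U = var" and VV: "covar M V V = var"
    using covar mean second_moment by (simp_all add: var_def power2_eq_square)
  have UV: "covar M U V = expectation (\<lambda>\<omega>. U \<omega> * V \<omega>) - (expectation U)\<^sup>2"
    using covar mean by (simp add: power2_eq_square)
  have "0 < var"
    using covar_self_pos_if_L2[OF U] UU by simp
  then have "corr M U V = (expectation (\<lambda>\<omega>. U \<omega> * V \<omega>) - (expectation U)\<^sup>2) / var"
    by (simp add: corr_def UU VV UV)
  with \<open>0 < var\<close> have "corr M U V = r \<longleftrightarrow> expectation (\<lambda>\<omega>. U \<omega> * V \<omega>) - (expectation U)\<^sup>2 = r * var"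
    by (auto simp: divide_eq_eq)
  then show ?thesis
    by (auto simp: var_def algebra_simps)
qed

lemma mono_cdf1:
  assumes "U \<in> borel_measurable M"
  shows "mono (cdf1 M U)"
  using assms unfolding cdf1_def by (intro monoI finite_measure_mono) auto

lemma jcdf_self:
  assumes "U \<in> borel_measurable M"
  shows "jcdf M U U a b = min (cdf1 M U a) (cdf1 M U b)"
proof -
  have "jcdf M U U a b = cdf1 M U (min a b)"
    unfolding jcdf_def cdf1_def by (auto intro!: arg_cong[where f=prob])
  then show ?thesis
    using mono_cdf1[OF assms] by (simp add: min_of_mono)
qed

lemma jcdf_le_cdf1:
  assumes [measurable]: "U \<in> borel_measurable M" "V \<in> borel_measurable M"
  shows "jcdf M U V a b \<le> cdf1 M U a" "jcdf M U V a b \<le> cdf1 M V b"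
  unfolding jcdf_def cdf1_def by (auto intro!: finite_measure_mono)

lemma jcdf_eq_cdf1_if_cdf1_eq_1:
  assumes [measurable]: "U \<in> borel_measurable M" "V \<in> borel_measurable M" and "cdf1 M V b = 1"
  shows "jcdf M U V a b = cdf1 M U a"
proof -
  have "AE \<omega> in M. V \<omega> \<le> b"
    using AE_prob_1[of "{\<omega>\<in>space M. V \<omega> \<le> b}"] assms(3) unfolding cdf1_def by auto
  then show ?thesis
    unfolding jcdf_def cdf1_def by (intro prob_eq_AE) auto
qed

lemma measure_pair_distr_atMost:
  assumes "U \<in> borel_measurable M" "V \<in> borel_measurable M"
  shows "measure (distr M borel U \<Otimes>\<^sub>M distr M borel V) {..(a, b)} = cdf1 M U a * cdf1 M V b"
proof -
  interpret V: prob_space "distr M borel V"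
    using assms(2) by (rule prob_space_distr)
  have "{..(a, b)} = {..a} \<times> {..b}"
    by (auto simp: less_eq_prod_def)
  then have "emeasure (distr M borel U \<Otimes>\<^sub>M distr M borel V) {..(a, b)}
      = emeasure (distr M borel U) {..a} * emeasure (distr M borel V) {..b}"
    by (simp add: V.emeasure_pair_measure_Times)
  then show ?thesis
    using assms by (simp add: measure_def enn2real_mult measure_distr_atMost[symmetric])
qed

lemma expectation_indicator_atMost:
  assumes [measurable]: "U \<in> borel_measurable M"
  shows "expectation (\<lambda>\<omega>. indicator {..a} (U \<omega>) :: real) = cdf1 M U a"
proof -
  have "expectation (\<lambda>\<omega>. indicator {..a} (U \<omega>) :: real) = expectation (indicator {\<omega>\<in>space M. U \<omega> \<le> a})"
    by (intro Bochner_Integration.integral_cong) (auto simp: indicator_def)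
  then show ?thesis
    by (simp add: cdf1_def)
qed

lemma expectation_indicator_atMost_pair:
  fixes x y :: real and g :: "real \<Rightarrow> real"
  assumes [measurable]: "U \<in> borel_measurable M" "V \<in> borel_measurable M"
  defines "g \<equiv> \<lambda>t. indicator {..x} t + indicator {..y} t"
  shows "expectation (\<lambda>\<omega>. g (U \<omega>) * g (V \<omega>))
    = jcdf M U V x x + jcdf M U V x y + jcdf M U V y x + jcdf M U V y y"
proof -
  have "expectation (\<lambda>\<omega>. indicator {..a} (U \<omega>) * indicator {..b} (V \<omega>) :: real) = jcdf M U V a b" for a b
  proof -
    have "expectation (\<lambda>\<omega>. indicator {..a} (U \<omega>) * indicator {..b} (V \<omega>) :: real)
      = expectation (indicator {\<omega>\<in>space M. U \<omega> \<le> a \<and> V \<omega> \<le> b})"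
      by (intro Bochner_Integration.integral_cong) (auto simp: indicator_def)
    then show ?thesis
      by (simp add: jcdf_def)
  qed
  moreover have "integrable M (\<lambda>\<omega>. indicator {..a} (U \<omega>) * indicator {..b} (V \<omega>) :: real)" for a b
    by (intro integrable_const_bound[where B=1]) (auto simp: indicator_def)
  ultimately show ?thesis
    by (simp add: g_def distrib_left distrib_right add.assoc)
qed

end

text \<open>
  For a = F(x) and b = F(y), 3a + b - (a + b)^2 is the variance of 1_(-inf,x](X) + 1_(-inf,y](X).
\<close>

lemma add_square_lt_3_mult_add:
  fixes a b :: real
  assumes "0 < a" "a \<le> b" "b < 1"
  shows "(a + b)\<^sup>2 < 3 * a + b"
proof -
  have "0 < a * (1 - b)" "0 \<le> a * (1 - a)" "0 \<le> b * (1 - b)"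
    using assms by simp_all
  then have "0 < a * (1 - a) + b * (1 - b) + 2 * (a * (1 - b))"
    by linarith
  then show ?thesis
    by (simp add: power2_eq_square algebra_simps)
qed

section \<open>Identically distributed pairs\<close>

locale identically_distributed_pair = prob_space +
  fixes X Y :: "'a \<Rightarrow> real"
  assumes X_measurable[measurable]: "X \<in> borel_measurable M"
    and Y_measurable[measurable]: "Y \<in> borel_measurable M"
    and same_distr: "distr M borel X = distr M borel Y"
begin

abbreviation F :: "real \<Rightarrow> real" where "F \<equiv> cdf1 M X"
abbreviation H :: "real \<Rightarrow> real \<Rightarrow> real" where "H \<equiv> jcdf M X Y"

lemma integrable_comp_Y_iff:
  fixes h :: "real \<Rightarrow> real"
  assumes [measurable]: "h \<in> borel_measurable borel"
  shows "integrable M (\<lambda>\<omega>. h (Y \<omega>)) \<longleftrightarrow> integrable M (\<lambda>\<omega>. h (X \<omega>))"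
  using integrable_distr_eq[of X M borel h] integrable_distr_eq[of Y M borel h] same_distr by simp

lemma expectation_comp_Y:
  fixes h :: "real \<Rightarrow> real"
  assumes [measurable]: "h \<in> borel_measurable borel"
  shows "expectation (\<lambda>\<omega>. h (Y \<omega>)) = expectation (\<lambda>\<omega>. h (X \<omega>))"
  using integral_distr[of X M borel h] integral_distr[of Y M borel h] same_distr by simp

lemma L2_comp_Y_iff:
  assumes [measurable]: "g \<in> borel_measurable borel"
  shows "L2 M (g \<circ> Y) \<longleftrightarrow> L2 M (g \<circ> X)"
proof -
  have "(AE \<omega> in M. g (Y \<omega>) = c) \<longleftrightarrow> (AE \<omega> in M. g (X \<omega>) = c)" for c
  proof -
    have "(AE \<omega> in M. g (Z \<omega>) = c) \<longleftrightarrow> (AE t in distr M borel Z. g t = c)"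
      if [measurable]: "Z \<in> borel_measurable M" for Z
      by (simp add: AE_distr_iff)
    from this[OF X_measurable] this[OF Y_measurable] show ?thesis
      unfolding same_distr by simp
  qed
  then show ?thesis
    using integrable_comp_Y_iff[of "\<lambda>t. (g t)\<^sup>2"] by (simp add: L2_def o_def)
qed

lemma cdf1_Y: "cdf1 M Y t = cdf1 M X t"
  using measure_distr_atMost[OF X_measurable] measure_distr_atMost[OF Y_measurable] same_distr
  by metis

text \<open>
  The four laws of the proof idea, indexed by {0, 1, 2, 3} so that the lemmas on finite
  combinations of measures apply.
\<close>

definition law_pairs :: "nat \<Rightarrow> (real \<times> real) measure" where
  "law_pairs = nth [distr M borel (\<lambda>\<omega>. (X \<omega>, Y \<omega>)), distr M borel (\<lambda>\<omega>. (Y \<omega>, X \<omega>)),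
    distr M borel (\<lambda>\<omega>. (X \<omega>, X \<omega>)), distr M borel X \<Otimes>\<^sub>M distr M borel X]"

definition quasi_frechet_weights :: "real \<Rightarrow> nat \<Rightarrow> real" where
  "quasi_frechet_weights r = nth [1, 1, - 2 * r, - 2 * (1 - r)]"

lemma sum_quasi_frechet_weights:
  "(\<Sum>i\<in>{0, 1, 2, 3}. quasi_frechet_weights r i * \<phi> i)
    = \<phi> 0 + \<phi> 1 - 2 * r * \<phi> 2 - 2 * (1 - r) * \<phi> 3"
  by (simp add: quasi_frechet_weights_def algebra_simps)

lemma prob_space_law_pairs: "i \<in> {0, 1, 2, 3} \<Longrightarrow> prob_space (law_pairs i)"
proof -
  interpret \<mu>: prob_space "distr M borel X"
    by (rule prob_space_distr) simp
  interpret \<mu>\<mu>: pair_prob_space "distr M borel X" "distr M borel X" ..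
  show "i \<in> {0, 1, 2, 3} \<Longrightarrow> prob_space (law_pairs i)"
    by (elim insertE emptyE) (simp_all add: law_pairs_def prob_space_distr \<mu>\<mu>.prob_space_axioms)
qed

lemma sets_law_pairs: "i \<in> {0, 1, 2, 3} \<Longrightarrow> sets (law_pairs i) = sets borel"
proof -
  have "sets (distr M borel X \<Otimes>\<^sub>M distr M borel X) = sets (borel \<Otimes>\<^sub>M (borel :: real measure))"
    by (intro sets_pair_measure_cong) simp_all
  then have sets_product: "sets (distr M borel X \<Otimes>\<^sub>M distr M borel X) = sets borel"
    by (simp only: borel_prod)
  show "i \<in> {0, 1, 2, 3} \<Longrightarrow> sets (law_pairs i) = sets borel"
    by (elim insertE emptyE) (simp_all add: law_pairs_def sets_product)
qed

lemma quasi_frechet_law_pairs: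
  assumes QF: "quasi_frechet M r X Y" and A: "A \<in> sets borel"
  shows "(\<Sum>i\<in>{0, 1, 2, 3}. quasi_frechet_weights r i * measure (law_pairs i) A) = 0"
proof (rule measure_combination_eq_0_generator[where G="range atMost" and \<Omega>=UNIV])
  have "{..z} \<inter> {..z'} = {..inf z z'}" for z z' :: "real \<times> real"
    by auto
  then show "Int_stable (range atMost :: (real \<times> real) set set)"
    by (auto simp: Int_stable_def)
  show "finite_measure (law_pairs i)" if "i \<in> {0, 1, 2, 3}" for i
    using prob_space_law_pairs[OF that] by (rule prob_space.finite_measure)
  show "sets (law_pairs i) = sigma_sets UNIV (range atMost)" if "i \<in> {0, 1, 2, 3}" for i
    using sets_law_pairs[OF that] by (simp add: borel_eq_atMost)
  have "measure (law_pairs i) UNIV = 1" if "i \<in> {0, 1, 2, 3}" for i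
    using prob_space.prob_space[OF prob_space_law_pairs[OF that]]
      sets_eq_imp_space_eq[OF sets_law_pairs[OF that]] by simp
  then show "(\<Sum>i\<in>{0, 1, 2, 3}. quasi_frechet_weights r i * measure (law_pairs i) UNIV) = 0"
    unfolding sum_quasi_frechet_weights by simp
  show "(\<Sum>i\<in>{0, 1, 2, 3}. quasi_frechet_weights r i * measure (law_pairs i) B) = 0"
    if "B \<in> range atMost" for B
  proof -
    obtain a b where B: "B = {..(a, b)}"
      using \<open>B \<in> range atMost\<close> by auto
    show ?thesis
      using QF[unfolded quasi_frechet_def, rule_format, of a b] unfolding sum_quasi_frechet_weights
      by (simp add: B law_pairs_def measure_distr_pair_atMost jcdf_self measure_pair_distr_atMost
          jcdf_commute[where U=X and V=Y] field_simps)
  qed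
  show "A \<in> sigma_sets UNIV (range atMost)"
    using A by (simp add: borel_eq_atMost)
qed simp

lemma quasi_frechet_integral:
  fixes f :: "real \<times> real \<Rightarrow> real"
  defines "\<mu> \<equiv> distr M borel X"
  assumes QF: "quasi_frechet M r X Y" and [measurable]: "f \<in> borel_measurable borel"
    and integrable: "integrable M (\<lambda>\<omega>. f (X \<omega>, Y \<omega>))" "integrable M (\<lambda>\<omega>. f (Y \<omega>, X \<omega>))"
      "integrable M (\<lambda>\<omega>. f (X \<omega>, X \<omega>))" "integrable (\<mu> \<Otimes>\<^sub>M \<mu>) f"
  shows "expectation (\<lambda>\<omega>. f (X \<omega>, Y \<omega>)) + expectation (\<lambda>\<omega>. f (Y \<omega>, X \<omega>))
    = 2 * r * expectation (\<lambda>\<omega>. f (X \<omega>, X \<omega>)) + 2 * (1 - r) * (\<integral>z. f z \<partial>(\<mu> \<Otimes>\<^sub>M \<mu>))"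
proof -
  have "integrable (law_pairs i) f" if "i \<in> {0, 1, 2, 3}" for i
    using that integrable by (elim insertE emptyE) (simp_all add: law_pairs_def \<mu>_def integrable_distr_eq)
  then have "(\<Sum>i\<in>{0, 1, 2, 3}. quasi_frechet_weights r i * (\<integral>z. f z \<partial>law_pairs i)) = 0"
    using quasi_frechet_law_pairs[OF QF] prob_space_law_pairs sets_law_pairs
    by (intro integral_combination_eq_0[where M=borel]) (simp_all add: prob_space_def)
  then show ?thesis
    unfolding sum_quasi_frechet_weights by (simp add: law_pairs_def \<mu>_def integral_distr)
qed

lemma quasi_frechet_product_moment:
  assumes QF: "quasi_frechet M r X Y" and [measurable]: "g \<in> borel_measurable borel"
    and sq_X: "integrable M (\<lambda>\<omega>. (g (X \<omega>))\<^sup>2)"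
  shows "expectation (\<lambda>\<omega>. g (X \<omega>) * g (Y \<omega>))
    = r * expectation (\<lambda>\<omega>. (g (X \<omega>))\<^sup>2) + (1 - r) * (expectation (\<lambda>\<omega>. g (X \<omega>)))\<^sup>2"
proof -
  define \<mu> where "\<mu> = distr M borel X"
  interpret \<mu>: prob_space \<mu>
    unfolding \<mu>_def by (rule prob_space_distr) simp
  interpret \<mu>\<mu>: pair_prob_space \<mu> \<mu> ..
  have sq_Y: "integrable M (\<lambda>\<omega>. (g (Y \<omega>))\<^sup>2)"
    using sq_X integrable_comp_Y_iff[of "\<lambda>t. (g t)\<^sup>2"] by simp
  have "integrable M (\<lambda>\<omega>. g (X \<omega>))"
    by (rule square_integrable_imp_integrable[OF _ sq_X]) measurable
  then have int_g: "integrable \<mu> g"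
    by (simp add: \<mu>_def integrable_distr_eq)
  have "(\<lambda>z. g (fst z) * g (snd z)) \<in> borel_measurable (borel \<Otimes>\<^sub>M borel)"
    by measurable
  then have "(\<lambda>z. g (fst z) * g (snd z)) \<in> borel_measurable borel"
    by (simp add: borel_prod)
  moreover have "integrable M (\<lambda>\<omega>. g (X \<omega>) * g (Y \<omega>))" "integrable M (\<lambda>\<omega>. g (Y \<omega>) * g (X \<omega>))"
    "integrable M (\<lambda>\<omega>. g (X \<omega>) * g (X \<omega>))"
    using sq_X sq_Y by (simp_all add: integrable_mult_if_square_integrable)
  moreover have "integrable (\<mu> \<Otimes>\<^sub>M \<mu>) (\<lambda>z. g (fst z) * g (snd z))"
    by (rule \<mu>\<mu>.integrable_product_mult[OF int_g int_g])
  ultimately have "expectation (\<lambda>\<omega>. g (X \<omega>) * g (Y \<omega>)) + expectation (\<lambda>\<omega>. g (Y \<omega>) * g (X \<omega>))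
    = 2 * r * expectation (\<lambda>\<omega>. g (X \<omega>) * g (X \<omega>))
      + 2 * (1 - r) * (\<integral>z. g (fst z) * g (snd z) \<partial>(\<mu> \<Otimes>\<^sub>M \<mu>))"
    using quasi_frechet_integral[OF QF, of "\<lambda>z. g (fst z) * g (snd z)"] by (simp add: \<mu>_def)
  moreover have "(\<integral>t. g t \<partial>\<mu>) = expectation (\<lambda>\<omega>. g (X \<omega>))"
    by (simp add: \<mu>_def integral_distr)
  ultimately show ?thesis
    using \<mu>\<mu>.integral_product_mult[OF int_g int_g] by (simp add: power2_eq_square algebra_simps)
qed

lemma quasi_frechet_imp_corr:
  assumes QF: "quasi_frechet M r X Y"
    and g[measurable]: "g \<in> borel_measurable borel" and L2_X: "L2 M (g \<circ> X)"
  shows "corr M (g \<circ> X) (g \<circ> Y) = r"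
proof -
  have L2_Y: "L2 M (g \<circ> Y)"
    using L2_X by (simp add: L2_comp_Y_iff)
  have "expectation (\<lambda>\<omega>. g (X \<omega>) * g (Y \<omega>))
    = r * expectation (\<lambda>\<omega>. (g (X \<omega>))\<^sup>2) + (1 - r) * (expectation (\<lambda>\<omega>. g (X \<omega>)))\<^sup>2"
    using L2_X by (intro quasi_frechet_product_moment[OF QF g]) (simp add: L2_def o_def)
  moreover have "expectation (\<lambda>\<omega>. g (Y \<omega>)) = expectation (\<lambda>\<omega>. g (X \<omega>))"
    "expectation (\<lambda>\<omega>. (g (Y \<omega>))\<^sup>2) = expectation (\<lambda>\<omega>. (g (X \<omega>))\<^sup>2)"
    using expectation_comp_Y[of g] expectation_comp_Y[of "\<lambda>t. (g t)\<^sup>2"] by simp_all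
  ultimately show ?thesis
    using corr_eq_iff_second_moments[OF L2_X L2_Y] by (simp add: o_def)
qed

lemma quasi_frechet_eq_if_degenerate:
  assumes "x \<le> y" and "F x = 0 \<or> F y = 1"
  shows "(H x y + H y x) / 2 = r * min (F x) (F y) + (1 - r) * F x * F y"
proof -
  have "F x \<le> F y"
    using mono_cdf1[OF X_measurable] assms(1) by (simp add: mono_def)
  then have min: "min (F x) (F y) = F x"
    by simp
  from assms(2) show ?thesis
  proof
    assume "F x = 0"
    moreover have "H x y \<le> F x" "H y x \<le> F x"
      using jcdf_le_cdf1[OF X_measurable Y_measurable, of x y] jcdf_le_cdf1[OF X_measurable Y_measurable, of y x]
      by (simp_all add: cdf1_Y)
    moreover have "0 \<le> H x y" "0 \<le> H y x"
      by (simp_all add: jcdf_def)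
    ultimately show ?thesis
      using min by simp
  next
    assume "F y = 1"
    then have "H x y = F x" "H y x = F x"
      using jcdf_eq_cdf1_if_cdf1_eq_1[OF X_measurable Y_measurable, of y x]
        jcdf_eq_cdf1_if_cdf1_eq_1[OF Y_measurable X_measurable, of y x] jcdf_commute[where U=Y and V=X and a=x and b=y]
      by (simp_all add: cdf1_Y)
    then show ?thesis
      using \<open>F y = 1\<close> min by (simp add: algebra_simps)
  qed
qed

lemma IC_imp_indicator_identity:
  assumes IC: "IC M r X Y" and "x \<le> y" and "0 < F x" and "F y < 1"
  shows "H x x + H x y + H y x + H y y = r * (3 * F x + F y) + (1 - r) * (F x + F y)\<^sup>2"
proof -
  define g :: "real \<Rightarrow> real" where "g t = indicator {..x} t + indicator {..y} t" for t
  have g_measurable[measurable]: "g \<in> borel_measurable borel"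
    unfolding g_def by measurable
  have F_mono: "F x \<le> F y"
    using mono_cdf1[OF X_measurable] \<open>x \<le> y\<close> by (simp add: mono_def)
  have "integrable M (\<lambda>\<omega>. indicator {..a} (X \<omega>) :: real)" for a
    by (intro integrable_const_bound[where B=1]) (auto simp: indicator_def)
  then have mean: "expectation (\<lambda>\<omega>. g (X \<omega>)) = F x + F y"
    by (simp add: g_def expectation_indicator_atMost)
  have second_moment: "expectation (\<lambda>\<omega>. (g (X \<omega>))\<^sup>2) = 3 * F x + F y"
    using expectation_indicator_atMost_pair[OF X_measurable X_measurable, of x y]
    by (simp add: g_def[abs_def] power2_eq_square jcdf_self min.absorb1[OF F_mono] min.absorb2[OF F_mono])
  have "integrable M (\<lambda>\<omega>. (g (X \<omega>))\<^sup>2)"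
    by (intro integrable_const_bound[where B=4]) (auto simp: g_def indicator_def)
  then have L2_X: "L2 M (g \<circ> X)"
    using L2_if_second_moment_gt[of "g \<circ> X"] add_square_lt_3_mult_add[OF \<open>0 < F x\<close> F_mono \<open>F y < 1\<close>]
      mean second_moment
    by (simp add: o_def)
  then have L2_Y: "L2 M (g \<circ> Y)"
    by (simp add: L2_comp_Y_iff)
  have "corr M (g \<circ> X) (g \<circ> Y) = r"
    using IC L2_X L2_Y by (simp add: IC_def admissible_def)
  moreover have "expectation (g \<circ> Y) = expectation (g \<circ> X)"
    "expectation (\<lambda>\<omega>. ((g \<circ> Y) \<omega>)\<^sup>2) = expectation (\<lambda>\<omega>. ((g \<circ> X) \<omega>)\<^sup>2)"
    using expectation_comp_Y[of g] expectation_comp_Y[of "\<lambda>t. (g t)\<^sup>2"] by (simp_all add: o_def)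
  ultimately have "expectation (\<lambda>\<omega>. g (X \<omega>) * g (Y \<omega>))
    = r * expectation (\<lambda>\<omega>. (g (X \<omega>))\<^sup>2) + (1 - r) * (expectation (\<lambda>\<omega>. g (X \<omega>)))\<^sup>2"
    using corr_eq_iff_second_moments[OF L2_X L2_Y, of r] by (simp add: o_def)
  moreover have "expectation (\<lambda>\<omega>. g (X \<omega>) * g (Y \<omega>)) = H x x + H x y + H y x + H y y"
    unfolding g_def by (rule expectation_indicator_atMost_pair[OF X_measurable Y_measurable])
  ultimately show ?thesis
    using mean second_moment by simp
qed

lemma IC_imp_jcdf_diagonal:
  assumes IC: "IC M r X Y"
  shows "H x x = r * F x + (1 - r) * (F x)\<^sup>2"
proof (cases "F x = 0 \<or> F x = 1")
  case True
  then show ?thesis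
    using quasi_frechet_eq_if_degenerate[of x x r] by (auto simp: power2_eq_square)
next
  case False
  moreover have "0 \<le> F x" "F x \<le> 1"
    by (simp_all add: cdf1_def)
  ultimately show ?thesis
    using IC_imp_indicator_identity[OF IC order.refl, of x] by (simp add: power2_eq_square algebra_simps)
qed

lemma IC_imp_quasi_frechet_le:
  assumes IC: "IC M r X Y" and "x \<le> y"
  shows "(H x y + H y x) / 2 = r * min (F x) (F y) + (1 - r) * F x * F y"
proof (cases "F x = 0 \<or> F y = 1")
  case True
  then show ?thesis
    using quasi_frechet_eq_if_degenerate[OF \<open>x \<le> y\<close>] by simp
next
  case False
  moreover have "F x \<le> F y"
    using mono_cdf1[OF X_measurable] \<open>x \<le> y\<close> by (simp add: mono_def)
  moreover have "0 \<le> F x" "F y \<le> 1"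
    by (simp_all add: cdf1_def)
  ultimately show ?thesis
    using IC_imp_indicator_identity[OF IC \<open>x \<le> y\<close>] IC_imp_jcdf_diagonal[OF IC, of x]
      IC_imp_jcdf_diagonal[OF IC, of y]
    by (simp add: min_def power2_eq_square field_simps)
qed

lemma IC_imp_quasi_frechet:
  assumes IC: "IC M r X Y"
  shows "quasi_frechet M r X Y"
  unfolding quasi_frechet_def
proof (intro allI)
  fix x y
  show "(H x y + H y x) / 2 = r * min (F x) (F y) + (1 - r) * F x * F y"
  proof (cases "x \<le> y")
    case True
    then show ?thesis
      by (rule IC_imp_quasi_frechet_le[OF IC])
  next
    case False
    then have "(H y x + H x y) / 2 = r * min (F y) (F x) + (1 - r) * F y * F x"
      by (intro IC_imp_quasi_frechet_le[OF IC]) simp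
    then show ?thesis
      by (simp add: ac_simps min.commute)
  qed
qed
end

theorem theorem3:
  fixes M :: "'a measure" and X Y :: "'a \<Rightarrow> real" and r :: real
  assumes "prob_space M" and "atomless M"
    and "L2 M X" and "L2 M Y"
    and "distr M borel X = distr M borel Y"
    and "-1 \<le> r" and "r \<le> 1"
  shows "IC M r X Y \<longleftrightarrow> quasi_frechet M r X Y"
proof -
  interpret identically_distributed_pair M X Y
    using assms(1,3-5) unfolding L2_def
    by (intro identically_distributed_pair.intro identically_distributed_pair_axioms.intro) auto
  show ?thesis
  proof
    assume "IC M r X Y"
    then show "quasi_frechet M r X Y"
      by (rule IC_imp_quasi_frechet)
  next
    assume QF: "quasi_frechet M r X Y"
    have "corr M (g \<circ> X) (g \<circ> Y) = r" if "admissible M g X Y" for g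
      using that quasi_frechet_imp_corr[OF QF] by (simp add: admissible_def)
    moreover have "corr M X Y = r"
      using quasi_frechet_imp_corr[OF QF, of id] assms(3) by simp
    ultimately show "IC M r X Y"
      using assms(3,4) by (simp add: IC_def)
  qed
qed

end
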